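(* If $n>3$, then $R(U_n)$ is dense in $\mathbb{C}$.
   Context: Let $\mathbf{T}=\{z\in\mathbb{C}:|z|=1\}$. An angle is an element of the quotient group $\mathbf{T}/\{\pm1\}$; in formulas an angle is represented by either of its two representatives $u\in\mathbf{T}$. For $p\in\mathbb{C}$ and an angle $u$, let $L_u(p)=\{p+ru: r\in\mathbb{R}\}$. For distinct angles $u,v$ and $p,q\in\mathbb{C}$, $I_{u,v}(p,q)$ denotes the unique point of $L_u(p)\cap L_v(q)$. For a subgroup $U$ of $\mathbf{T}/\{\pm1\}$, $R(U)$ denotes the smallest subset of $\mathbb{C}$ that contains $0$ and $1$ and such that $I_{u,v}(p,q)\in R(U)$ whenever $p,q\in R(U)$ and $u,v$ are distinct elements of $U$. For $n\ge 3$, $U_n$ denotes the cyclic subgroup of $\mathbf{T}/\{\pm1\}$ of order $n$ generated by the class of $e^{i\pi/n}$. *)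

theory Defs
  imports "HOL-Analysis.Analysis"
begin

text \<open>An angle (element of T/{+-1}) is represented by a unit complex number u;
  u and -u represent the same angle.\<close>

definition line :: "complex \<Rightarrow> complex \<Rightarrow> complex set" where
  "line u p = {p + complex_of_real r * u | r :: real. True}"

definition same_angle :: "complex \<Rightarrow> complex \<Rightarrow> bool" where
  "same_angle u v \<longleftrightarrow> v = u \<or> v = - u"

definition isect :: "complex \<Rightarrow> complex \<Rightarrow> complex \<Rightarrow> complex \<Rightarrow> complex" where
  "isect u v p q = (THE z. z \<in> line u p \<and> z \<in> line v q)"

text \<open>A subgroup U of T/{+-1} is represented by the set of all its representatives
  in T (a subset of T closed under negation).\<close>

inductive_set Rset :: "complex set \<Rightarrow> complex set" for U :: "complex set" where
  zero: "0 \<in> Rset U"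
| one: "1 \<in> Rset U"
| step: "\<lbrakk>p \<in> Rset U; q \<in> Rset U; u \<in> U; v \<in> U; \<not> same_angle u v\<rbrakk>
          \<Longrightarrow> isect u v p q \<in> Rset U"

text \<open>U_n: the cyclic subgroup generated by the class of exp(i pi/n); its set of
  representatives in T is {exp(i pi k/n) | k :: int}.\<close>

definition U_n :: "nat \<Rightarrow> complex set" where
  "U_n n = {exp (\<i> * complex_of_real (pi * real_of_int k / real n)) | k. k \<in> (UNIV :: int set)}"

end

theory Submission
  imports Defs
begin

(*
  Two directions u, v are transversal when Im (u * cnj v) \<noteq> 0; then the
  lines L_u(p) and L_v(q) meet in one point and every z is uniquely z = x u + y v with
  real x, y.  Intersecting L_u(0) with L_v(z) shows that the u-component x u of a point
  z \<in> R(U) lies in R(U) again.  With three pairwise transversal directions in U, this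
  component calculus shows that R(U) is an additive subgroup of \<complex>.

  For U_n with n > 3 put \<theta> = \<pi>/n.  The directions 1, cis \<theta>, cis 2\<theta>, cis 3\<theta> lie in U_n.
  Projecting a real point x along cis \<theta> onto the cis 3\<theta>-axis, and then back along cis 2\<theta>
  onto the real axis, multiplies it by \<mu> = (sin \<theta> / sin 2\<theta>)^2 with 0 < \<mu> < 1.  Hence
  R(U_n) contains the lattices \<mu>^k (\<int> + \<int> w) for a fixed non-real w and all k, and such
  a subgroup of \<complex> is dense.
*)

section \<open>Transversal directions and intersections of lines\<close>

definition transversal :: "complex \<Rightarrow> complex \<Rightarrow> bool" where
  "transversal u v \<longleftrightarrow> Im (u * cnj v) \<noteq> 0"

lemma transversal_commute: "transversal v u \<longleftrightarrow> transversal u v"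
proof -
  have "Im (v * cnj u) = - Im (u * cnj v)" by (simp add: algebra_simps)
  then show ?thesis unfolding transversal_def by linarith
qed

lemma transversal_not_same_angle: "transversal u v \<Longrightarrow> \<not> same_angle u v"
  unfolding transversal_def same_angle_def by auto

lemma Im_of_real_mult_cnj: "Im (complex_of_real a * w * cnj v) = a * Im (w * cnj v)"
  by (simp add: algebra_simps)

lemma isect_eqI:
  assumes uv: "transversal u v"
    and z1: "z = p + complex_of_real r * u" and z2: "z = q + complex_of_real s * v"
  shows "isect u v p q = z"
  unfolding isect_def
proof (rule the_equality)
  show "z \<in> line u p \<and> z \<in> line v q" using z1 z2 unfolding line_def by blast
next
  fix z' assume "z' \<in> line u p \<and> z' \<in> line v q"
  then obtain r' s' where r': "z' = p + complex_of_real r' * u"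
    and s': "z' = q + complex_of_real s' * v"
    unfolding line_def by blast
  have "p + complex_of_real r * u - (p + complex_of_real r' * u)
      = q + complex_of_real s * v - (q + complex_of_real s' * v)"
    using z1 z2 r' s' by simp
  then have "complex_of_real (r - r') * u = complex_of_real (s - s') * v"
    by (simp add: algebra_simps)
  then have "Im (complex_of_real (r - r') * u * cnj v) = Im (complex_of_real (s - s') * v * cnj v)"
    by simp
  then have "(r - r') * Im (u * cnj v) = 0"
    by (simp only: Im_of_real_mult_cnj) simp
  with uv have "r = r'" unfolding transversal_def by simp
  then show "z' = z" using z1 r' by simp
qed

lemma Rset_common_point:
  assumes "p \<in> Rset U" "q \<in> Rset U" "u \<in> U" "v \<in> U" "transversal u v"
    and "z = p + complex_of_real r * u" "z = q + complex_of_real s * v"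
  shows "z \<in> Rset U"
proof -
  have "isect u v p q \<in> Rset U"
    using assms transversal_not_same_angle by (intro Rset.step) auto
  then show ?thesis using isect_eqI[OF assms(5-7)] by simp
qed

section \<open>Coordinates with respect to two transversal directions\<close>

definition coord :: "complex \<Rightarrow> complex \<Rightarrow> complex \<Rightarrow> real" where
  "coord u v z = Im (z * cnj v) / Im (u * cnj v)"

lemma coord_decomp:
  assumes "transversal u v"
  shows "z = complex_of_real (coord u v z) * u + complex_of_real (coord v u z) * v"
proof -
  define D where "D = Im u * Re v - Re u * Im v"
  define a where "a = (Im z * Re v - Re z * Im v) / D"
  define b where "b = - ((Im z * Re u - Re z * Im u) / D)"
  have D0: "D \<noteq> 0" using assms by (simp add: transversal_def D_def)
  have "coord u v z = a" by (simp add: coord_def a_def D_def)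
  moreover have "coord v u z = b"
  proof -
    have "Im (v * cnj u) = - D" by (simp add: D_def algebra_simps)
    moreover have "Im (z * cnj u) = Im z * Re u - Re z * Im u" by simp
    ultimately show ?thesis by (simp only: coord_def b_def divide_minus_right)
  qed
  moreover have "Re z = a * Re u + b * Re v" and "Im z = a * Im u + b * Im v"
    using D0 by (simp_all add: a_def b_def field_simps) (simp_all add: D_def algebra_simps)
  ultimately show ?thesis by (simp add: complex_eq_iff)
qed

lemma coord_unique:
  assumes "transversal u v" and "z = complex_of_real x * u + complex_of_real y * v"
  shows "coord u v z = x"
proof -
  have "Im (z * cnj v) = x * Im (u * cnj v)"
    using assms(2) by (simp add: algebra_simps)
  then show ?thesis using assms(1) by (simp add: coord_def transversal_def)
qed

text \<open>Components of points of R(U): intersect L_u(0) with L_v(z).\<close>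

lemma Rset_coord:
  assumes "z \<in> Rset U" "u \<in> U" "v \<in> U" "transversal u v"
  shows "complex_of_real (coord u v z) * u \<in> Rset U"
  using coord_decomp[OF assms(4), of z]
  by (intro Rset_common_point[OF Rset.zero assms(1-4), of _ "coord u v z" "- coord v u z"])
     (simp_all add: algebra_simps)

lemma Rset_component:
  assumes "z \<in> Rset U" "u \<in> U" "v \<in> U" "transversal u v"
    and "z = complex_of_real x * u + complex_of_real y * v"
  shows "complex_of_real x * u \<in> Rset U"
  using Rset_coord[OF assms(1-4)] coord_unique[OF assms(4,5)] by simp

text \<open>Moving a point x w of R(U) onto the u-axis along v rescales it by the coordinate
  of w; this is how the main argument shrinks real points.\<close>

lemma Rset_axis_transfer:
  assumes "complex_of_real x * w \<in> Rset U" "u \<in> U" "v \<in> U" "transversal u v"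
  shows "complex_of_real (x * coord u v w) * u \<in> Rset U"
proof -
  have "coord u v (complex_of_real x * w) = x * coord u v w"
    by (simp only: coord_def Im_of_real_mult_cnj times_divide_eq_right)
  with Rset_coord[OF assms] show ?thesis by simp
qed

lemma Rset_split:
  assumes "z \<in> Rset U" "u \<in> U" "v \<in> U" "transversal u v"
  obtains x y where "z = complex_of_real x * u + complex_of_real y * v"
    "complex_of_real x * u \<in> Rset U" "complex_of_real y * v \<in> Rset U"
proof
  show "z = complex_of_real (coord u v z) * u + complex_of_real (coord v u z) * v"
    using coord_decomp[OF assms(4)] .
  show "complex_of_real (coord u v z) * u \<in> Rset U" "complex_of_real (coord v u z) * v \<in> Rset U"
    using Rset_coord[OF assms] Rset_coord[OF assms(1,3,2)] assms(4)
    by (simp_all add: transversal_commute)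
qed

text \<open>Conversely, two components recombine: intersect L_v(x u) with L_u(y v).\<close>

lemma Rset_recombine:
  assumes "complex_of_real x * u \<in> Rset U" "complex_of_real y * v \<in> Rset U"
    "u \<in> U" "v \<in> U" "transversal u v"
  shows "complex_of_real x * u + complex_of_real y * v \<in> Rset U"
  by (rule Rset_common_point[OF assms(2,1,3-5), of _ x y]) simp_all

section \<open>Three transversal directions make R(U) an additive group\<close>

text \<open>Negation along one axis: route a u through the axes t and v and back.\<close>

lemma Rset_neg_on_axis:
  assumes au: "complex_of_real a * u \<in> Rset U" and U: "u \<in> U" "v \<in> U" "t \<in> U"
    and uv: "transversal u v" and ut: "transversal u t" and tv: "transversal t v"
  shows "complex_of_real (- a) * u \<in> Rset U"
proof -
  obtain \<alpha> \<beta> where d: "u = complex_of_real \<alpha> * t + complex_of_real \<beta> * v"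
    using coord_decomp[OF tv] by blast
  have e1: "complex_of_real a * u = complex_of_real (a * \<alpha>) * t + complex_of_real (a * \<beta>) * v"
    by (subst d) (simp add: algebra_simps)
  have t_part: "complex_of_real (a * \<alpha>) * t \<in> Rset U"
    using Rset_component[OF au U(3) U(2) tv e1] .
  have e2: "complex_of_real (a * \<alpha>) * t = complex_of_real (- a * \<beta>) * v + complex_of_real a * u"
    using e1 by (simp add: algebra_simps)
  have v_part: "complex_of_real (- a * \<beta>) * v \<in> Rset U"
    using Rset_component[OF t_part U(2) U(1) _ e2] uv by (simp add: transversal_commute)
  have e3: "complex_of_real (- a * \<beta>) * v = complex_of_real (- a) * u + complex_of_real (a * \<alpha>) * t"
    using e1 by (simp add: algebra_simps)
  show ?thesis
    using Rset_component[OF v_part U(1) U(3) ut e3] .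
qed

text \<open>Addition along one axis: split b u into its t- and v-parts, add the v-part to a u,
  and recombine with the t-part on the u-axis.\<close>

lemma Rset_add_on_axis:
  assumes au: "complex_of_real a * u \<in> Rset U" and bu: "complex_of_real b * u \<in> Rset U"
    and U: "u \<in> U" "v \<in> U" "t \<in> U"
    and uv: "transversal u v" and ut: "transversal u t" and tv: "transversal t v"
  shows "complex_of_real (a + b) * u \<in> Rset U"
proof -
  obtain \<gamma> \<delta> where d: "complex_of_real b * u = complex_of_real \<gamma> * t + complex_of_real \<delta> * v"
    using coord_decomp[OF tv] by blast
  have t_part: "complex_of_real \<gamma> * t \<in> Rset U"
    using Rset_component[OF bu U(3) U(2) tv d] .
  have v_part: "complex_of_real \<delta> * v \<in> Rset U"
    using Rset_component[OF bu U(2) U(3), of \<delta> \<gamma>] d tv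
    by (simp add: transversal_commute add.commute)
  have "complex_of_real a * u + complex_of_real \<delta> * v \<in> Rset U"
    using Rset_recombine[OF au v_part U(1) U(2) uv] .
  moreover have "complex_of_real (a + b) * u
      = (complex_of_real a * u + complex_of_real \<delta> * v) + complex_of_real \<gamma> * t"
    by (simp add: distrib_right d)
  moreover have "transversal t u" using ut by (simp add: transversal_commute)
  ultimately show ?thesis
    using Rset_common_point[OF _ Rset.zero U(3) U(1), of _ _ \<gamma> "a + b"] by simp
qed

definition three_transversal :: "complex set \<Rightarrow> bool" where
  "three_transversal U \<longleftrightarrow> (\<exists>u\<in>U. \<exists>v\<in>U. \<exists>t\<in>U.
     transversal u v \<and> transversal u t \<and> transversal v t)"

lemma three_transversalE:
  assumes "three_transversal U"
  obtains u v t where "u \<in> U" "v \<in> U" "t \<in> U"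
    "transversal u v" "transversal v u" "transversal u t" "transversal t u"
    "transversal v t" "transversal t v"
  using assms unfolding three_transversal_def by (auto simp: transversal_commute)

text \<open>Negation and addition act componentwise in the basis (u, v).\<close>

lemma Rset_uminus:
  assumes U: "three_transversal U" and z: "z \<in> Rset U"
  shows "- z \<in> Rset U"
proof -
  obtain u v t where D: "u \<in> U" "v \<in> U" "t \<in> U"
    "transversal u v" "transversal v u" "transversal u t" "transversal t u"
    "transversal v t" "transversal t v"
    using three_transversalE[OF U] by blast
  obtain x y where d: "z = complex_of_real x * u + complex_of_real y * v"
    and "complex_of_real x * u \<in> Rset U" "complex_of_real y * v \<in> Rset U"
    using Rset_split[OF z D(1,2,4)] by blast
  then have "complex_of_real (- x) * u \<in> Rset U" "complex_of_real (- y) * v \<in> Rset U"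
    using Rset_neg_on_axis[OF _ D(1-3) D(4,6,9)] Rset_neg_on_axis[OF _ D(2,1,3) D(5,8,7)]
    by blast+
  from Rset_recombine[OF this D(1,2,4)] show ?thesis
    using d by (simp add: algebra_simps)
qed

lemma Rset_add:
  assumes U: "three_transversal U" and z: "z \<in> Rset U" and w: "w \<in> Rset U"
  shows "z + w \<in> Rset U"
proof -
  obtain u v t where D: "u \<in> U" "v \<in> U" "t \<in> U"
    "transversal u v" "transversal v u" "transversal u t" "transversal t u"
    "transversal v t" "transversal t v"
    using three_transversalE[OF U] by blast
  obtain x y where d: "z = complex_of_real x * u + complex_of_real y * v"
    and "complex_of_real x * u \<in> Rset U" "complex_of_real y * v \<in> Rset U"
    using Rset_split[OF z D(1,2,4)] by blast
  moreover obtain x' y' where d': "w = complex_of_real x' * u + complex_of_real y' * v"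
    and "complex_of_real x' * u \<in> Rset U" "complex_of_real y' * v \<in> Rset U"
    using Rset_split[OF w D(1,2,4)] by blast
  ultimately have "complex_of_real (x + x') * u \<in> Rset U" "complex_of_real (y + y') * v \<in> Rset U"
    using Rset_add_on_axis[OF _ _ D(1-3) D(4,6,9)] Rset_add_on_axis[OF _ _ D(2,1,3) D(5,8,7)]
    by blast+
  from Rset_recombine[OF this D(1,2,4)] show ?thesis
    using d d' by (simp add: algebra_simps)
qed

section \<open>A density criterion for subgroups of \<complex>\<close>

lemma int_mult_mem:
  fixes G :: "'a :: ring_1 set"
  assumes zero: "0 \<in> G" and add: "\<And>x y. x \<in> G \<Longrightarrow> y \<in> G \<Longrightarrow> x + y \<in> G"
    and neg: "\<And>x. x \<in> G \<Longrightarrow> - x \<in> G" and z: "z \<in> G"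
  shows "of_int m * z \<in> G"
proof (induction m rule: int_induct[where k = 0])
  case base
  then show ?case using zero by simp
next
  case (step1 i)
  then show ?case using add[OF step1(2) z] by (simp add: distrib_right)
next
  case (step2 i)
  then show ?case using add[OF step2(2) neg[OF z]] by (simp add: algebra_simps)
qed

lemma floor_approx:
  fixes a h :: real
  assumes "h > 0"
  shows "\<bar>a - of_int \<lfloor>a / h\<rfloor> * h\<bar> \<le> h"
proof -
  have f1: "of_int \<lfloor>a / h\<rfloor> \<le> a / h" by (rule of_int_floor_le)
  have f2: "a / h < of_int \<lfloor>a / h\<rfloor> + 1" by (rule real_of_int_floor_add_one_gt)
  have "of_int \<lfloor>a / h\<rfloor> * h \<le> a" using mult_right_mono[OF f1, of h] assms by simp
  moreover have "a < (of_int \<lfloor>a / h\<rfloor> + 1) * h"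
    using mult_strict_right_mono[OF f2 assms] assms by simp
  ultimately show ?thesis by (simp add: algebra_simps)
qed

text \<open>A subgroup of \<complex> containing the lattices \<mu>^k (\<int> + \<int> w), with 0 < \<mu> < 1 and w not
  real, is dense: any z = a + b w is approximated by rounding a and b to multiples of
  a small \<mu>^k.\<close>

lemma dense_subgroup_criterion:
  fixes G :: "complex set" and \<mu> :: real and w :: complex
  assumes zero: "0 \<in> G" and add: "\<And>x y. x \<in> G \<Longrightarrow> y \<in> G \<Longrightarrow> x + y \<in> G"
    and neg: "\<And>x. x \<in> G \<Longrightarrow> - x \<in> G"
    and mu: "0 < \<mu>" "\<mu> < 1"
    and real_gens: "\<And>k. complex_of_real (\<mu> ^ k) \<in> G"
    and w_gens: "\<And>k. complex_of_real (\<mu> ^ k) * w \<in> G"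
    and w: "Im w \<noteq> 0"
  shows "closure G = UNIV"
proof -
  have mul: "of_int m * z \<in> G" if "z \<in> G" for m z
    using int_mult_mem[OF zero add neg that] by blast
  have "z \<in> closure G" for z
  proof (unfold closure_approachable, intro allI impI)
    fix e :: real assume e: "e > 0"
    define b where "b = Im z / Im w"
    define a where "a = Re z - b * Re w"
    have zab: "z = complex_of_real a + complex_of_real b * w"
      using w by (simp add: complex_eq_iff a_def b_def)
    have "e / (1 + norm w) > 0" using e by (simp add: add_pos_nonneg)
    then obtain k where k: "\<mu> ^ k < e / (1 + norm w)"
      using real_arch_pow_inv[OF _ mu(2)] by blast
    define h where "h = \<mu> ^ k"
    have h0: "h > 0" using mu by (simp add: h_def)
    define y where
      "y = of_int \<lfloor>a / h\<rfloor> * complex_of_real h + of_int \<lfloor>b / h\<rfloor> * (complex_of_real h * w)"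
    have yG: "y \<in> G" unfolding y_def h_def using add mul real_gens w_gens by blast
    have "z - y = complex_of_real (a - of_int \<lfloor>a / h\<rfloor> * h)
                 + complex_of_real (b - of_int \<lfloor>b / h\<rfloor> * h) * w"
      unfolding zab y_def by (simp add: algebra_simps)
    then have "norm (z - y) \<le> \<bar>a - of_int \<lfloor>a / h\<rfloor> * h\<bar> + \<bar>b - of_int \<lfloor>b / h\<rfloor> * h\<bar> * norm w"
      by (metis norm_triangle_ineq norm_mult norm_of_real)
    also have "\<dots> \<le> h + h * norm w"
      using floor_approx[OF h0, of a] floor_approx[OF h0, of b]
      by (intro add_mono mult_right_mono) simp_all
    also have "\<dots> = h * (1 + norm w)" by (simp add: algebra_simps)
    also have "\<dots> < e" using k unfolding h_def
      by (simp add: pos_less_divide_eq add_pos_nonneg)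
    finally have "dist y z < e" by (simp add: dist_norm norm_minus_commute)
    then show "\<exists>y\<in>G. dist y z < e" using yG by blast
  qed
  then show ?thesis by auto
qed

section \<open>Four directions at angles 0, \<theta>, 2\<theta>, 3\<theta> give a dense set\<close>

lemma Im_cis_cnj: "Im (cis a * cnj (cis b)) = sin (a - b)"
  by (simp add: cis_cnj cis_mult)

text \<open>For 0 < \<theta> \<le> \<pi>/4 the four directions are pairwise transversal, and the
  shrinking factor sin \<theta> / sin 2\<theta> = 1 / (2 cos \<theta>) lies strictly between 0 and 1.\<close>

lemma sin_multiples_pos:
  assumes "0 < \<theta>" "\<theta> \<le> pi / 4"
  shows "sin \<theta> > 0" "sin (2 * \<theta>) > 0" "sin (3 * \<theta>) > 0" "sin \<theta> < sin (2 * \<theta>)"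
proof -
  have "3 * \<theta> < pi" using assms pi_gt_zero by linarith
  then show pos: "sin \<theta> > 0" "sin (2 * \<theta>) > 0" "sin (3 * \<theta>) > 0"
    using assms by (auto intro!: sin_gt_zero)
  have "cos (pi / 3) < cos \<theta>"
    using assms pi_gt_zero by (intro cos_monotone_0_pi) auto
  then have "cos \<theta> > 1 / 2" by (simp add: cos_60)
  then have "sin \<theta> * 1 < sin \<theta> * (2 * cos \<theta>)"
    using pos(1) by (intro mult_strict_left_mono) auto
  then show "sin \<theta> < sin (2 * \<theta>)" by (simp add: sin_double)
qed

text \<open>With \<alpha> = - sin \<theta> / sin 2\<theta>: projecting a real point x along cis \<theta> onto the
  cis 3\<theta>-axis gives x \<alpha> cis 3\<theta>, and projecting that along cis 2\<theta> back onto the real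
  axis gives x \<alpha>^2.  Since 0 < \<alpha>^2 < 1, the density criterion applies.\<close>

lemma dense_if_four_directions:
  assumes \<theta>: "0 < \<theta>" "\<theta> \<le> pi / 4"
    and U: "1 \<in> U" "cis \<theta> \<in> U" "cis (2 * \<theta>) \<in> U" "cis (3 * \<theta>) \<in> U"
  shows "closure (Rset U) = UNIV"
proof -
  define \<alpha> where "\<alpha> = - sin \<theta> / sin (2 * \<theta>)"
  define v where "v = cis (3 * \<theta>)"
  note S = sin_multiples_pos[OF \<theta>]
  have sin_diffs: "sin (3 * \<theta> - \<theta>) = sin (2 * \<theta>)" "sin (3 * \<theta> - 2 * \<theta>) = sin \<theta>"
    by (simp_all add: algebra_simps)
  have tr: "transversal 1 v" "transversal 1 (cis \<theta>)" "transversal v (cis \<theta>)"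
    "transversal 1 (cis (2 * \<theta>))"
    using S unfolding transversal_def v_def Im_cis_cnj sin_diffs by simp_all
  have group: "three_transversal U"
    unfolding three_transversal_def using U tr v_def by blast
  have coord_v: "coord v (cis \<theta>) 1 = \<alpha>"
    unfolding coord_def v_def Im_cis_cnj sin_diffs \<alpha>_def by simp
  have coord_1: "coord 1 (cis (2 * \<theta>)) v = \<alpha>"
    unfolding coord_def v_def Im_cis_cnj sin_diffs \<alpha>_def by simp
  have to_v: "complex_of_real (x * \<alpha>) * v \<in> Rset U" if "complex_of_real x \<in> Rset U" for x
    using Rset_axis_transfer[of x 1 U v "cis \<theta>"] that U(2,4) tr(3) coord_v
    by (simp add: v_def)
  have to_real: "complex_of_real (y * \<alpha>) \<in> Rset U" if "complex_of_real y * v \<in> Rset U" for y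
    using Rset_axis_transfer[OF that U(1,3) tr(4)] coord_1 by simp
  have powers: "complex_of_real ((\<alpha>\<^sup>2) ^ k) \<in> Rset U" for k
  proof (induction k)
    case 0 then show ?case by (simp add: Rset.one)
  next
    case (Suc k)
    then show ?case using to_real[OF to_v[OF Suc]] by (simp add: power2_eq_square algebra_simps)
  qed
  have "0 < \<alpha>\<^sup>2" "\<alpha>\<^sup>2 < 1"
    using S by (simp_all add: \<alpha>_def power_less_one_iff divide_less_eq)
  moreover have "complex_of_real ((\<alpha>\<^sup>2) ^ k) * (complex_of_real \<alpha> * v) \<in> Rset U" for k
    using to_v[OF powers[of k]] by (simp add: mult.assoc)
  moreover have "Im (complex_of_real \<alpha> * v) \<noteq> 0"
    using S by (simp add: \<alpha>_def v_def)
  ultimately show ?thesis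
    using Rset_add[OF group] Rset_uminus[OF group] Rset.zero powers
    by (intro dense_subgroup_criterion) blast+
qed

lemma cis_in_U_n: "cis (real k * (pi / real n)) \<in> U_n n"
  unfolding U_n_def cis_conv_exp
  by (rule CollectI, rule exI[of _ "int k"]) (simp add: mult.commute)

theorem mainTheorem11:
  fixes n :: nat
  assumes "n > 3"
  shows "closure (Rset (U_n n)) = UNIV"
proof (rule dense_if_four_directions)
  show "0 < pi / real n" using assms by simp
  show "pi / real n \<le> pi / 4" using assms by (intro divide_left_mono) simp_all
  show "1 \<in> U_n n" using cis_in_U_n[of 0 n] by simp
  show "cis (pi / real n) \<in> U_n n" using cis_in_U_n[of 1 n] by simp
  show "cis (2 * (pi / real n)) \<in> U_n n" using cis_in_U_n[of 2 n] by simp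
  show "cis (3 * (pi / real n)) \<in> U_n n" using cis_in_U_n[of 3 n] by simp
qed

end
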